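(* Let $n\in\mathbb{N}_{\ge1}$ and $r',P>1$. There exists a self-attention layer $\mathcal F^{(max)}_{SA}:\mathbb{R}^{3\times n}\to\mathbb{R}^{3\times n}$ with head number $1$, head size $3$ and weight bound $\frac12\log(8n^{3/2}r'P)$ such that for any $\boldsymbol x=(x_1,\dots,x_n)\in\mathbb{R}^{1\times n}$ satisfying $|x_i|\le2r'$ for all $i\in[n]$ and $x_i\le x_{\max}-2$ for every $i$ with $x_i\ne x_{\max}$ (where $x_{\max}=\max_ix_i$), $$\mathcal F^{(max)}_{SA}\begin{pmatrix}\boldsymbol x\\ \boldsymbol 1_{1\times n}\\ \boldsymbol 0_{1\times n}\end{pmatrix}=\begin{pmatrix}\boldsymbol x\\ \boldsymbol 1_{1\times n}\\ \widetilde x_{\max}\boldsymbol 1_{1\times n}\end{pmatrix}$$ for some $\widetilde x_{\max}$ with $x_{\max}-\frac{1}{2P\sqrt n}\le\widetilde x_{\max}\le x_{\max}$. In particular, $\mathcal F^{(max)}_{SA}$ maps $\begin{pmatrix}\boldsymbol 0_{1\times n}\\ \boldsymbol 1_{1\times n}\\ \boldsymbol 0_{1\times n}\end{pmatrix}$ to itself.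
   Context: A self-attention layer on $\mathbb{R}^{D\times n}$ with head number $H$ and head size $S$ is $X\mapsto X+\sum_{h=1}^HW_O^{(h)}W_V^{(h)}X\sigma_S(X^\top W_K^{(h)\top}W_Q^{(h)}X)$ with $W_O^{(h)}\in\mathbb{R}^{D\times S}$, $W_V^{(h)},W_K^{(h)},W_Q^{(h)}\in\mathbb{R}^{S\times D}$, where $\sigma_S$ is the column-wise softmax $[\sigma_S(\boldsymbol z)]_i=e^{z_i}/\sum_je^{z_j}$. Its weight bound is the maximum absolute value of the entries of all these matrices. *)

theory Defs
  imports Complex_Main
begin

text \<open>Matrices are represented as functions nat \<Rightarrow> nat \<Rightarrow> real; only entries with
  in-range indices are meaningful. A D\<times>n matrix X has entries X i j for i<D, j<n.
  Head h parameters: WO h : D\<times>S, WV h, WK h, WQ h : S\<times>D.\<close>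

definition attn_score ::
  "nat \<Rightarrow> nat \<Rightarrow> (nat \<Rightarrow> nat \<Rightarrow> nat \<Rightarrow> real) \<Rightarrow> (nat \<Rightarrow> nat \<Rightarrow> nat \<Rightarrow> real)
   \<Rightarrow> (nat \<Rightarrow> nat \<Rightarrow> real) \<Rightarrow> nat \<Rightarrow> nat \<Rightarrow> nat \<Rightarrow> real" where
  "attn_score D S WK WQ X h k j =
     (\<Sum>s<S. (\<Sum>d<D. WK h s d * X d k) * (\<Sum>d<D. WQ h s d * X d j))"

definition attn_softmax ::
  "nat \<Rightarrow> nat \<Rightarrow> nat \<Rightarrow> (nat \<Rightarrow> nat \<Rightarrow> nat \<Rightarrow> real) \<Rightarrow> (nat \<Rightarrow> nat \<Rightarrow> nat \<Rightarrow> real)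
   \<Rightarrow> (nat \<Rightarrow> nat \<Rightarrow> real) \<Rightarrow> nat \<Rightarrow> nat \<Rightarrow> nat \<Rightarrow> real" where
  "attn_softmax D S n WK WQ X h k j =
     exp (attn_score D S WK WQ X h k j) / (\<Sum>k'<n. exp (attn_score D S WK WQ X h k' j))"

definition self_attention ::
  "nat \<Rightarrow> nat \<Rightarrow> nat \<Rightarrow> nat \<Rightarrow> (nat \<Rightarrow> nat \<Rightarrow> nat \<Rightarrow> real) \<Rightarrow> (nat \<Rightarrow> nat \<Rightarrow> nat \<Rightarrow> real)
   \<Rightarrow> (nat \<Rightarrow> nat \<Rightarrow> nat \<Rightarrow> real) \<Rightarrow> (nat \<Rightarrow> nat \<Rightarrow> nat \<Rightarrow> real)
   \<Rightarrow> (nat \<Rightarrow> nat \<Rightarrow> real) \<Rightarrow> nat \<Rightarrow> nat \<Rightarrow> real" where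
  "self_attention D n H S WO WV WK WQ X i j =
     X i j + (\<Sum>h<H. \<Sum>k<n.
        (\<Sum>t<S. WO h i t * (\<Sum>d<D. WV h t d * X d k)) * attn_softmax D S n WK WQ X h k j)"

definition weight_bounded ::
  "nat \<Rightarrow> nat \<Rightarrow> nat \<Rightarrow> real \<Rightarrow> (nat \<Rightarrow> nat \<Rightarrow> nat \<Rightarrow> real) \<Rightarrow> (nat \<Rightarrow> nat \<Rightarrow> nat \<Rightarrow> real)
   \<Rightarrow> (nat \<Rightarrow> nat \<Rightarrow> nat \<Rightarrow> real) \<Rightarrow> (nat \<Rightarrow> nat \<Rightarrow> nat \<Rightarrow> real) \<Rightarrow> bool" where
  "weight_bounded D H S B WO WV WK WQ \<longleftrightarrow>
     (\<forall>h<H. (\<forall>i<D. \<forall>t<S. \<bar>WO h i t\<bar> \<le> B) \<and>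
            (\<forall>t<S. \<forall>d<D. \<bar>WV h t d\<bar> \<le> B \<and> \<bar>WK h t d\<bar> \<le> B \<and> \<bar>WQ h t d\<bar> \<le> B))"

end

theory Submission imports Defs begin

text \<open>With keys B x_k and a constant query, the attention weights of every column are the
  softmax of c x_k with c = 2B, and the values are the x_k, so the layer writes the
  softmax-weighted mean of x into the third row. This mean never exceeds max x; and since every
  non-maximal entry lies at distance d \<ge> 2 below the maximum, its contribution to the deficit
  is at most d exp(-c d) \<le> 2 exp(-2c). With exp(2B) = 8 n^(3/2) r' P the total deficit
  2 n exp(-4B) is below 1/(2 P sqrt n).\<close>

definition softmax_mean :: "real \<Rightarrow> ('a \<Rightarrow> real) \<Rightarrow> 'a set \<Rightarrow> real" where
  "softmax_mean c x I = (\<Sum>k\<in>I. x k * exp (c * x k)) / (\<Sum>k\<in>I. exp (c * x k))"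

lemma softmax_mean_le_Max:
  assumes "finite I" "I \<noteq> {}"
  shows "softmax_mean c x I \<le> Max (x ` I)"
proof -
  have "(\<Sum>k\<in>I. x k * exp (c * x k)) \<le> (\<Sum>k\<in>I. Max (x ` I) * exp (c * x k))"
    using assms by (intro sum_mono mult_right_mono) auto
  moreover have "(\<Sum>k\<in>I. exp (c * x k)) > 0"
    using assms by (intro sum_pos) auto
  ultimately show ?thesis
    by (simp add: softmax_mean_def divide_le_eq sum_distrib_left)
qed

lemma mult_exp_neg_le:
  fixes c d :: real
  assumes "c \<ge> 1/2" "d \<ge> 2"
  shows "d * exp (- c * d) \<le> 2 * exp (-2 * c)"
proof -
  have "d \<le> 2 * (1 + c * (d - 2))"
    using assms mult_right_mono[of "1/2" c "d - 2"] by simp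
  also have "\<dots> \<le> 2 * exp (c * (d - 2))"
    using exp_ge_add_one_self[of "c * (d - 2)"] by (intro mult_left_mono) simp_all
  finally have "d * exp (- c * d) \<le> 2 * exp (c * (d - 2)) * exp (- c * d)"
    by (rule mult_right_mono) simp
  also have "\<dots> = 2 * exp (-2 * c)"
    by (simp add: exp_add[symmetric] algebra_simps)
  finally show ?thesis .
qed

lemma Max_minus_le_softmax_mean:
  assumes "finite I" "I \<noteq> {}" "c \<ge> 1/2"
    and gap: "\<And>k. k \<in> I \<Longrightarrow> x k \<noteq> Max (x ` I) \<Longrightarrow> x k \<le> Max (x ` I) - 2"
  shows "Max (x ` I) - 2 * real (card I) * exp (-2 * c) \<le> softmax_mean c x I"
proof -
  define M where "M = Max (x ` I)"
  define Z where "Z = (\<Sum>k\<in>I. exp (c * x k))"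
  have "M \<in> x ` I" unfolding M_def using assms(1,2) by simp
  then obtain m where "m \<in> I" "x m = M" by blast
  then have exp_M_le: "exp (c * M) \<le> Z"
    unfolding Z_def using assms(1) by (metis member_le_sum exp_ge_zero)
  have deficit: "(M - x k) * exp (c * x k) \<le> 2 * exp (-2 * c) * exp (c * M)" if "k \<in> I" for k
  proof (cases "x k = M")
    case False
    then have "M - x k \<ge> 2" using gap that unfolding M_def by fastforce
    from mult_right_mono[OF mult_exp_neg_le[OF assms(3) this], of "exp (c * M)"]
    show ?thesis by (simp add: mult.assoc exp_add[symmetric] algebra_simps)
  qed simp
  have "M * Z - (\<Sum>k\<in>I. x k * exp (c * x k)) = (\<Sum>k\<in>I. (M - x k) * exp (c * x k))"
    by (simp add: Z_def sum_distrib_left sum_subtractf left_diff_distrib)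
  also have "\<dots> \<le> card I * (2 * exp (-2 * c) * exp (c * M))"
    using sum_mono[OF deficit] by simp
  also have "\<dots> \<le> card I * (2 * exp (-2 * c)) * Z"
    using exp_M_le by (simp add: mult.assoc mult_left_mono)
  finally have "(M - 2 * card I * exp (-2 * c)) * Z \<le> (\<Sum>k\<in>I. x k * exp (c * x k))"
    by (simp add: algebra_simps)
  moreover have "Z > 0" using less_le_trans[OF exp_gt_zero exp_M_le] .
  ultimately show ?thesis
    by (simp add: softmax_mean_def M_def Z_def[symmetric] le_divide_eq)
qed

text \<open>Row 0 carries x and row 1 the constant 1. Each of the three key rows is B x_k and each
  query row is 2/3, so the score of (k, j) is 2 B x_k; each value row is 2/3 x_k and the
  output row 2 sums them with weight 1/2, giving x_k.\<close>

definition max_WO :: "nat \<Rightarrow> nat \<Rightarrow> nat \<Rightarrow> real" where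
  "max_WO h i t = (if i = 2 then 1/2 else 0)"

definition max_WV :: "nat \<Rightarrow> nat \<Rightarrow> nat \<Rightarrow> real" where
  "max_WV h t d = (if d = 0 then 2/3 else 0)"

definition max_WK :: "real \<Rightarrow> nat \<Rightarrow> nat \<Rightarrow> nat \<Rightarrow> real" where
  "max_WK B h t d = (if d = 0 then B else 0)"

definition max_WQ :: "nat \<Rightarrow> nat \<Rightarrow> nat \<Rightarrow> real" where
  "max_WQ h t d = (if d = 1 then 2/3 else 0)"

lemma sum_lessThan_3: "(\<Sum>i<3. f i) = f (0::nat) + f 1 + (f 2 :: real)"
  by (simp add: eval_nat_numeral)

lemma weight_bounded_max_layer:
  assumes "2/3 \<le> B"
  shows "weight_bounded 3 1 3 B max_WO max_WV (max_WK B) max_WQ"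
  using assms by (simp add: weight_bounded_def max_WO_def max_WV_def max_WK_def max_WQ_def)

lemma self_attention_max_layer:
  assumes ones: "\<And>j. X 1 j = 1" and "i < 3"
  shows "self_attention 3 n 1 3 max_WO max_WV (max_WK B) max_WQ X i j =
    X i j + (if i = 2 then softmax_mean (2 * B) (X 0) {..<n} else 0)"
proof -
  have "\<And>k. attn_score 3 3 (max_WK B) max_WQ X 0 k j = 2 * B * X 0 k"
    using ones by (simp add: attn_score_def sum_lessThan_3 max_WK_def max_WQ_def)
  then show ?thesis
    using assms(2)
    by (simp add: self_attention_def attn_softmax_def softmax_mean_def sum_lessThan_3
        max_WO_def max_WV_def sum_divide_distrib)
qed

lemma exp_four_thirds_le_8: "exp (4/3) \<le> (8::real)"
proof -
  have "exp (4/3::real) ^ 3 = exp 1 ^ 4"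
    by (simp add: exp_of_nat_mult[symmetric])
  also have "\<dots> \<le> 3 ^ 4"
    by (rule power_mono[OF exp_le]) simp
  also have "\<dots> \<le> (8::real) ^ 3"
    by simp
  finally have "exp (4/3::real) ^ Suc 2 \<le> 8 ^ Suc 2"
    by (simp add: numeral_3_eq_3)
  then show ?thesis
    by (rule power_le_imp_le_base) simp
qed

lemma powr_three_halves:
  fixes x :: real
  assumes "0 \<le> x"
  shows "x powr (3/2) = x * sqrt x"
proof -
  have "x powr (3/2) = x powr (1 + 1/2)"
    by simp
  also have "\<dots> = x powr 1 * x powr (1/2)"
    by (rule powr_add)
  finally show ?thesis
    using assms by (simp add: powr_half_sqrt)
qed

lemma max_layer_temperature:
  fixes r' P :: real
  assumes "n \<ge> 1" "r' > 1" "P > 1"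
  defines "B \<equiv> ln (8 * real n powr (3/2) * r' * P) / 2"
  shows "2/3 \<le> B" and "2 * real n * exp (-2 * (2 * B)) \<le> 1 / (2 * P * sqrt n)"
proof -
  define m where "m = real n * sqrt n"
  define A where "A = 8 * m * r' * P"
  have B: "B = ln A / 2"
    by (simp add: B_def A_def m_def powr_three_halves)
  have "1 \<le> sqrt n"
    using assms(1) by simp
  then have "1 \<le> m"
    unfolding m_def using assms(1) mult_mono[of 1 "real n" 1 "sqrt n"] by simp
  then have A_ge_8: "8 \<le> A" and A_ge: "4 * P * m \<le> A"
    unfolding A_def using assms(2,3) mult_mono[of 1 m 1 r'] mult_mono[of 1 "m * r'" 1 P]
    by (simp_all add: mult_right_mono mult_left_mono)
  have "4/3 \<le> ln A"
    using exp_four_thirds_le_8 A_ge_8 by (subst ln_ge_iff) auto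
  then show "2/3 \<le> B"
    by (simp add: B)
  have "exp (-2 * (2 * B)) \<le> exp (- 2 * B)"
    using \<open>2/3 \<le> B\<close> by simp
  also have "\<dots> = 1 / A"
    using A_ge_8 by (simp add: B exp_minus inverse_eq_divide)
  finally have "2 * real n * exp (-2 * (2 * B)) \<le> 2 * real n / A"
    by (simp add: mult_left_mono divide_inverse)
  also have "\<dots> \<le> 1 / (2 * P * sqrt n)"
    using A_ge A_ge_8 assms(3) \<open>1 \<le> sqrt n\<close> by (simp add: m_def divide_simps algebra_simps)
  finally show "2 * real n * exp (-2 * (2 * B)) \<le> 1 / (2 * P * sqrt n)" .
qed

theorem lemma18:
  fixes n :: nat and r' P :: real
  assumes "n \<ge> 1" and "r' > 1" and "P > 1"
  shows "\<exists>WO WV WK WQ.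
    weight_bounded 3 1 3 (ln (8 * real n powr (3/2) * r' * P) / 2) WO WV WK WQ \<and>
    (\<forall>x :: nat \<Rightarrow> real.
       (\<forall>i<n. \<bar>x i\<bar> \<le> 2 * r') \<and>
       (\<forall>i<n. x i \<noteq> Max (x ` {..<n}) \<longrightarrow> x i \<le> Max (x ` {..<n}) - 2) \<longrightarrow>
       (\<exists>xt. Max (x ` {..<n}) - 1 / (2 * P * sqrt (real n)) \<le> xt \<and> xt \<le> Max (x ` {..<n}) \<and>
          (\<forall>i<3. \<forall>j<n.
             self_attention 3 n 1 3 WO WV WK WQ
               (\<lambda>a b. if a = 0 then x b else if a = 1 then 1 else 0) i j
             = (if i = 0 then x j else if i = 1 then 1 else xt)))) \<and>
    (\<forall>i<3. \<forall>j<n.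
       self_attention 3 n 1 3 WO WV WK WQ (\<lambda>a b. if a = 1 then 1 else 0) i j
       = (if i = 1 then 1 else 0))"
proof -
  define B where "B = ln (8 * real n powr (3/2) * r' * P) / 2"
  note B = max_layer_temperature[OF assms, folded B_def]
  have nonempty: "{..<n} \<noteq> {}" using assms(1) by (simp add: lessThan_empty_iff)
  \<comment> \<open>The bound on the entries is not needed: the gap alone controls the softmax mean.\<close>
  have layer: "\<exists>xt. Max (x ` {..<n}) - 1 / (2 * P * sqrt n) \<le> xt \<and> xt \<le> Max (x ` {..<n}) \<and>
          (\<forall>i<3. \<forall>j<n. self_attention 3 n 1 3 max_WO max_WV (max_WK B) max_WQ
               (\<lambda>a b. if a = 0 then x b else if a = 1 then 1 else 0) i j
             = (if i = 0 then x j else if i = 1 then 1 else xt))"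
    if gap: "\<forall>i<n. x i \<noteq> Max (x ` {..<n}) \<longrightarrow> x i \<le> Max (x ` {..<n}) - 2" for x
  proof -
    let ?xt = "softmax_mean (2 * B) x {..<n}"
    have "Max (x ` {..<n}) - 2 * real n * exp (-2 * (2 * B)) \<le> ?xt"
      using Max_minus_le_softmax_mean[of "{..<n}" "2 * B" x] B(1) gap nonempty by simp
    then have "Max (x ` {..<n}) - 1 / (2 * P * sqrt n) \<le> ?xt"
      using B(2) by linarith
    moreover have "?xt \<le> Max (x ` {..<n})"
      using nonempty by (simp add: softmax_mean_le_Max)
    moreover have "\<forall>i<3. \<forall>j<n. self_attention 3 n 1 3 max_WO max_WV (max_WK B) max_WQ
               (\<lambda>a b. if a = 0 then x b else if a = 1 then 1 else 0) i j
             = (if i = 0 then x j else if i = 1 then 1 else ?xt)"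
      by (intro allI impI, subst self_attention_max_layer) auto
    ultimately show ?thesis by blast
  qed
  have zero: "\<forall>i<3. \<forall>j<n.
      self_attention 3 n 1 3 max_WO max_WV (max_WK B) max_WQ (\<lambda>a b. if a = 1 then 1 else 0) i j
      = (if i = 1 then 1 else 0)"
    by (intro allI impI, subst self_attention_max_layer) (auto simp: softmax_mean_def)
  show ?thesis
    unfolding B_def[symmetric]
    using weight_bounded_max_layer[OF B(1)] layer zero by blast
qed

end
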